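(* Let $d \ge 1$ be an integer, let $\phi \in \mathbb{R}$, and put $\phi' = -(2+\phi)$. Let \[ Q = \begin{pmatrix}1&0&0&0\\0&1&0&0\\0&0&1&0\\0&0&0&-1\end{pmatrix}. \] Then for every integer $t \ge 0$, every position $n \in \{0,1,\dots,d-1\}$ and every vector $\psi(0,0) \in \mathbb{C}^4$ (specifying the initial state $\ket{0}\otimes\psi(0,0)$), \[ p(n,t,\phi;\psi(0,0)) = p(n,t,\phi';Q\,\psi(0,0)). \]
   Context: Recycled coin quantum walk on the cycle of size $d$ with two coins. The Hilbert space is $\mathcal{H}_P\otimes\mathcal{H}_{C_1}\otimes\mathcal{H}_{C_2}$, where $\mathcal{H}_P$ has orthonormal basis $\{\ket{n}: n=0,\dots,d-1\}$ and each coin space $\mathcal{H}_{C_i}$ has orthonormal basis $\{\ket{\downarrow},\ket{\uparrow}\}$; basis kets are written $\ket{n,c_1,c_2}$. For a real $\theta$, $C(\theta)$ is the operator on a coin space with $C(\theta)\ket{\downarrow}=\cos\theta\ket{\downarrow}+\sin\theta\ket{\uparrow}$ and $C(\theta)\ket{\uparrow}=\sin\theta\ket{\downarrow}-\cos\theta\ket{\uparrow}$. For a memory parameter $\phi\in\mathbb{R}$, the coin flip operator on $\mathcal{H}_{C_1}\otimes\mathcal{H}_{C_2}$ is $\widehat{C}=\ket{\downarrow}\bra{\downarrow}\otimes C(\pi/4)+\ket{\uparrow}\bra{\uparrow}\otimes C(\tfrac{\pi}{4}(1+\phi))$. The shift operator $S$ acts by $\ket{n,c_1,\downarrow}\mapsto\ket{n-1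 \bmod d,c_1,\downarrow}$ and $\ket{n,c_1,\uparrow}\mapsto\ket{n+1 \bmod d,c_1,\uparrow}$ for $c_1\in\{\downarrow,\uparrow\}$. The memory update $M$ on $\mathcal{H}_{C_1}\otimes\mathcal{H}_{C_2}$ swaps the two coins: $\ket{c_1,c_2}\mapsto\ket{c_2,c_1}$. One step of the walk is $U=(I_P\otimes M)\,S\,(I_P\otimes\widehat{C})$ (depending on $\phi$). A vector $\psi(0,0)=(a_1,a_2,a_3,a_4)^T\in\mathbb{C}^4$ (unit norm) denotes the coin state $a_1\ket{\downarrow\downarrow}+a_2\ket{\downarrow\uparrow}+a_3\ket{\uparrow\downarrow}+a_4\ket{\uparrow\uparrow}$ (first arrow = coin 1, second = coin 2), and the initial state of the walk is $\ket{\psi_0}=\ket{0}\otimes\psi(0,0)$. The position probability is $p(n,t,\phi;\psi(0,0))=\sum_{c_1,c_2\in\{\downarrow,\uparrow\}}\left|\bra{n,c_1,c_2}U^t\ket{\psi_0}\right|^2$, with $U$ built from memory parameter $\phi$. *)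

theory Defs
  imports "HOL-Analysis.Analysis"
begin

text \<open>Coin basis: False = down, True = up. A walk state is a function
  position (nat, taken modulo d, only 0..d-1 relevant) => coin1 => coin2 => amplitude.\<close>

type_synonym wstate = "nat \<Rightarrow> bool \<Rightarrow> bool \<Rightarrow> complex"

text \<open>Matrix entry <c'|C(theta)|c>: C down = cos down + sin up, C up = sin down - cos up.\<close>
definition coinC :: "real \<Rightarrow> bool \<Rightarrow> bool \<Rightarrow> complex" where
  "coinC \<theta> c' c = (if c = c' then (if c then - complex_of_real (cos \<theta>) else complex_of_real (cos \<theta>))
                    else complex_of_real (sin \<theta>))"

definition coin_angle :: "real \<Rightarrow> bool \<Rightarrow> real" where
  "coin_angle \<phi> c1 = (if c1 then pi / 4 * (1 + \<phi>) else pi / 4)"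

definition coin_op :: "real \<Rightarrow> wstate \<Rightarrow> wstate" where
  "coin_op \<phi> \<psi> = (\<lambda>n c1 c2. \<Sum>c\<in>UNIV. coinC (coin_angle \<phi> c1) c2 c * \<psi> n c1 c)"

definition shift_op :: "nat \<Rightarrow> wstate \<Rightarrow> wstate" where
  "shift_op d \<psi> = (\<lambda>n c1 c2. if c2 then \<psi> ((n + d - 1) mod d) c1 True
                              else \<psi> ((n + 1) mod d) c1 False)"

definition swap_op :: "wstate \<Rightarrow> wstate" where
  "swap_op \<psi> = (\<lambda>n c1 c2. \<psi> n c2 c1)"

definition step_U :: "nat \<Rightarrow> real \<Rightarrow> wstate \<Rightarrow> wstate" where
  "step_U d \<phi> \<psi> = swap_op (shift_op d (coin_op \<phi> \<psi>))"

text \<open>Coin vector (a1,a2,a3,a4) = a1|dd> + a2|du> + a3|ud> + a4|uu>; in complex^4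
  the components are indexed 1,2,3,4 (4 = 0 in the numeral type).\<close>
definition coin_amp :: "complex^4 \<Rightarrow> bool \<Rightarrow> bool \<Rightarrow> complex" where
  "coin_amp a c1 c2 = (if \<not> c1 \<and> \<not> c2 then a $ 1 else if \<not> c1 \<and> c2 then a $ 2
                       else if c1 \<and> \<not> c2 then a $ 3 else a $ 4)"

definition init_state :: "complex^4 \<Rightarrow> wstate" where
  "init_state a = (\<lambda>n c1 c2. if n = 0 then coin_amp a c1 c2 else 0)"

definition walk_prob :: "nat \<Rightarrow> nat \<Rightarrow> nat \<Rightarrow> real \<Rightarrow> complex^4 \<Rightarrow> real" where
  "walk_prob d n t \<phi> a = (\<Sum>c1\<in>UNIV. \<Sum>c2\<in>UNIV. (cmod ((step_U d \<phi> ^^ t) (init_state a) n c1 c2))\<^sup>2)"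

definition Qmat :: "complex^4^4" where
  "Qmat = (\<chi> i j. if i = j then (if i = 4 then -1 else 1) else 0)"

end

theory Submission
  imports Defs
begin

text \<open>The matrix \<open>Q\<close> flips the sign of the \<open>|\<up>\<up>\<rangle>\<close> coin amplitude. Replacing \<open>\<phi>\<close> by
  \<open>-(2 + \<phi>)\<close> negates the controlled angle \<open>\<pi>/4 (1 + \<phi>)\<close>, and \<open>C(-\<theta>) = Z C(\<theta>) Z\<close> with
  \<open>Z = diag(1, -1)\<close>; hence the coin flip for \<open>-(2 + \<phi>)\<close> is the one for \<open>\<phi>\<close> conjugated by
  this sign flip. The shift and the coin swap commute with it, so \<open>U(-(2 + \<phi>)) = Q U(\<phi>) Q\<close>
  on the whole walk, and a sign change of amplitudes leaves all probabilities unchanged.\<close>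

definition flip_uu :: "wstate \<Rightarrow> wstate" where
  "flip_uu \<psi> = (\<lambda>n c1 c2. (if c1 \<and> c2 then -1 else 1) * \<psi> n c1 c2)"

lemma cmod_flip_uu [simp]: "cmod (flip_uu \<psi> n c1 c2) = cmod (\<psi> n c1 c2)"
  by (simp add: flip_uu_def norm_mult)

lemma coin_angle_reflect: "coin_angle (-(2 + \<phi>)) True = - coin_angle \<phi> True"
  by (simp add: coin_angle_def algebra_simps)

lemma coin_op_flip_uu: "coin_op (-(2 + \<phi>)) (flip_uu \<psi>) = flip_uu (coin_op \<phi> \<psi>)"
proof (intro ext)
  fix n c1 c2
  have "cos (coin_angle (-(2 + \<phi>)) True) = cos (coin_angle \<phi> True)"
    and "sin (coin_angle (-(2 + \<phi>)) True) = - sin (coin_angle \<phi> True)"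
    unfolding coin_angle_reflect by simp_all
  moreover have "coin_angle (-(2 + \<phi>)) False = coin_angle \<phi> False"
    by (simp add: coin_angle_def)
  ultimately show "coin_op (-(2 + \<phi>)) (flip_uu \<psi>) n c1 c2 = flip_uu (coin_op \<phi> \<psi>) n c1 c2"
    unfolding coin_op_def flip_uu_def
    by (cases c1; cases c2) (simp_all add: UNIV_bool coinC_def algebra_simps)
qed

lemma shift_op_flip_uu: "shift_op d (flip_uu \<psi>) = flip_uu (shift_op d \<psi>)"
  by (auto intro!: ext simp: shift_op_def flip_uu_def)

lemma swap_op_flip_uu: "swap_op (flip_uu \<psi>) = flip_uu (swap_op \<psi>)"
  by (auto intro!: ext simp: swap_op_def flip_uu_def conj_commute)

lemma step_U_flip_uu: "step_U d (-(2 + \<phi>)) (flip_uu \<psi>) = flip_uu (step_U d \<phi> \<psi>)"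
  unfolding step_U_def coin_op_flip_uu shift_op_flip_uu swap_op_flip_uu ..

lemma funpow_step_U_flip_uu:
  "(step_U d (-(2 + \<phi>)) ^^ t) (flip_uu \<psi>) = flip_uu ((step_U d \<phi> ^^ t) \<psi>)"
  by (induction t) (simp_all del: minus_add_distrib add: step_U_flip_uu)

lemma init_state_Qmat: "init_state (Qmat *v a) = flip_uu (init_state a)"
  by (auto intro!: ext simp: init_state_def flip_uu_def coin_amp_def
      matrix_vector_mult_def Qmat_def sum_4)

theorem theorem1:
  fixes d n t :: nat and \<phi> :: real and a :: "complex^4"
  assumes "d \<ge> 1" and "n < d"
  shows "walk_prob d n t \<phi> a = walk_prob d n t (-(2 + \<phi>)) (Qmat *v a)"
  unfolding walk_prob_def init_state_Qmat funpow_step_U_flip_uu by simp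

end
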